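(* Let $\tilde f$ satisfy (H1), (H2) and (H3). For $i\in\{0,1\}$, $\rho_{\tilde A_i}(\tilde f)$ is contained in the convex hull of $\rho_{\Theta(\tilde A_i)}(\tilde f)$. In particular $\rho_{\tilde A_0}(\tilde f)\subset(0,+\infty)$ and $\rho_{\tilde A_1}(\tilde f)\subset(-\infty,0)$.
   Context: Let $\tilde f$ be a homeomorphism of $\mathbb{R}^2$ isotopic to the identity and commuting with $T(x,y)=(x+1,y)$; $p_1$ is the first coordinate projection. For a horizontal line $\Gamma$, $U^+_\Gamma$ and $U^-_\Gamma$ denote the open half-planes above and below $\Gamma$. Hypotheses: (H1) $\Gamma_0,\Gamma_1,\Gamma_2$ are horizontal lines with $\Gamma_0\subset U^+_{\Gamma_1}$, $\Gamma_1\subset U^+_{\Gamma_2}$, and $\tilde f(\Gamma_j)\subset U^-_{\Gamma_j}$ for $j=0,1,2$; (H2) $\tilde f^n(\Gamma_0)\cap\Gamma_2\ne\emptyset$ for every integer $n\ge1$; (H3) for $i\in\{0,1\}$, letting $\tilde A_i$ be the closed band between $\Gamma_i$ and $\Gamma_{i+1}$, the sets $\Theta(\tilde A_0),\Theta(\tilde A_1)$ are non-empty and $\rho_{\Theta(\tilde A_0)}(\tilde f)\subset(0,+\infty)$, $\rho_{\Theta(\tilde A_1)}(\tilde f)\subset(-\infty,0)$. Here $\Theta(\tilde E)=\{x\in\tilde E:\tilde f^n(x)\in\tilde E\ \forall n\in\mathbb{Z}\}$, and for a closed $T$-invariant set $\tilde E$ contained in a horizontal band, $\rho_{\tilde E}(\tilde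 f)=\bigcap_{m\ge1}\mathrm{Cl}\big(\bigcup_{n\ge m}\{\frac1n(p_1(\tilde f^n(\tilde z))-p_1(\tilde z)): \tilde z\in\tilde E,\ \tilde f^n(\tilde z)\in\tilde E\}\big)$, closure in $\overline{\mathbb{R}}=\mathbb{R}\cup\{\pm\infty\}$. *)

theory Defs
  imports "HOL-Analysis.Analysis" "HOL-Library.Extended_Real"
begin

text \<open>The plane is modelled as real \<times> real; p1 is fst.\<close>

definition Ttrans :: "real \<times> real \<Rightarrow> real \<times> real" where
  "Ttrans z = (fst z + 1, snd z)"

definition isotopic_to_id :: "(real \<times> real \<Rightarrow> real \<times> real) \<Rightarrow> bool" where
  "isotopic_to_id f \<longleftrightarrow>
     (\<exists>H :: real \<times> (real \<times> real) \<Rightarrow> real \<times> real.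
        continuous_on ({0..1} \<times> UNIV) H \<and>
        (\<forall>t\<in>{0..1}. \<exists>g. homeomorphism UNIV UNIV (\<lambda>z. H (t, z)) g) \<and>
        (\<forall>z. H (0, z) = z) \<and> (\<forall>z. H (1, z) = f z))"

definition hline :: "real \<Rightarrow> (real \<times> real) set" where
  "hline c = {z. snd z = c}"

definition Uplus :: "(real \<times> real) set \<Rightarrow> (real \<times> real) set" where
  "Uplus \<Gamma> = {z. \<forall>w\<in>\<Gamma>. snd z > snd w}"

definition Uminus :: "(real \<times> real) set \<Rightarrow> (real \<times> real) set" where
  "Uminus \<Gamma> = {z. \<forall>w\<in>\<Gamma>. snd z < snd w}"

definition band :: "real \<Rightarrow> real \<Rightarrow> (real \<times> real) set" where
  "band a b = {z. min a b \<le> snd z \<and> snd z \<le> max a b}"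

definition iter_int :: "('a \<Rightarrow> 'a) \<Rightarrow> int \<Rightarrow> 'a \<Rightarrow> 'a" where
  "iter_int f n = (if 0 \<le> n then f ^^ nat n else inv f ^^ nat (- n))"

definition Theta :: "(real \<times> real \<Rightarrow> real \<times> real) \<Rightarrow> (real \<times> real) set \<Rightarrow> (real \<times> real) set" where
  "Theta f E = {x \<in> E. \<forall>n::int. iter_int f n x \<in> E}"

definition rot_set :: "(real \<times> real \<Rightarrow> real \<times> real) \<Rightarrow> (real \<times> real) set \<Rightarrow> ereal set" where
  "rot_set f E = (\<Inter>m\<in>{1::nat..}. closure (\<Union>n\<in>{m..}.
      {ereal ((fst ((f ^^ n) z) - fst z) / real n) | z. z \<in> E \<and> (f ^^ n) z \<in> E}))"

definition ereal_hull :: "ereal set \<Rightarrow> ereal set" where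
  "ereal_hull S = {x. \<exists>a\<in>S. \<exists>b\<in>S. a \<le> x \<and> x \<le> b}"

end

theory Submission
  imports Defs
begin

text \<open>
  A free line \<open>c\<close> (one mapped below itself) either traps the half-plane \<open>{y \<le> c}\<close>, i.e.
  maps it into \<open>{y < c}\<close>, or the image of \<open>{y < c}\<close> covers \<open>{y \<ge> c}\<close>. A point of
  \<open>\<Theta>(A\<^sub>i)\<close> excludes the second case for the lower boundary line of \<open>A\<^sub>i\<close>, and then
  \<open>\<Gamma>\<^sub>0\<close> traps as well, since \<open>f\<close> is bounded on \<open>A\<^sub>0\<close>. A band between two trapping lines
  is orbit-convex: an orbit segment that starts and ends in it stays in it.

  For a closed, translation-invariant, orbit-convex set \<open>E\<close> in a band, every rotation number
  of \<open>E\<close> lies between the extreme rotation numbers of \<open>\<Theta>(E)\<close>. If every point of \<open>\<Theta>(E)\<close>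
  is displaced by less than \<open>m c\<close> in \<open>m\<close> steps, then by compactness so is the midpoint of
  every sufficiently long orbit segment in \<open>E\<close>; cutting an orbit segment of length \<open>n\<close> into
  blocks of length \<open>m\<close> then bounds its displacement by \<open>n c + O(1)\<close>.
\<close>

section \<open>Translation-invariant observables and Birkhoff sums\<close>

definition shift :: "int \<Rightarrow> real \<times> real \<Rightarrow> real \<times> real" where
  "shift j z = (fst z + of_int j, snd z)"

lemma shift_simps [simp]: "fst (shift j z) = fst z + of_int j" "snd (shift j z) = snd z"
  by (simp_all add: shift_def)

lemma shift_shift [simp]: "shift i (shift j z) = shift (i + j) z"
  by (simp add: shift_def prod_eq_iff)

lemma shift_0 [simp]: "shift 0 z = z"
  by (simp add: shift_def)

definition shift_invariant :: "(real \<times> real \<Rightarrow> 'a) \<Rightarrow> bool" where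
  "shift_invariant \<psi> \<longleftrightarrow> (\<forall>j z. \<psi> (shift j z) = \<psi> z)"

lemma shift_invariantD: "shift_invariant \<psi> \<Longrightarrow> \<psi> (shift j z) = \<psi> z"
  unfolding shift_invariant_def by blast

lemma shift_floor_in_unit_strip:
  "0 \<le> fst (shift (- \<lfloor>fst z\<rfloor>) z) \<and> fst (shift (- \<lfloor>fst z\<rfloor>) z) \<le> 1"
  using of_int_floor_le[of "fst z"] real_of_int_floor_add_one_gt[of "fst z"] by simp linarith

lemma shift_invariant_bounded_on_strip:
  fixes \<psi> :: "real \<times> real \<Rightarrow> real"
  assumes "continuous_on UNIV \<psi>" "shift_invariant \<psi>"
  obtains B where "\<And>z. a \<le> snd z \<Longrightarrow> snd z \<le> b \<Longrightarrow> \<bar>\<psi> z\<bar> \<le> B"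
proof -
  have "compact (\<psi> ` ({0..1} \<times> {a..b}))"
    by (intro compact_continuous_image compact_Times compact_Icc continuous_on_subset[OF assms(1)]) auto
  then obtain B where "\<forall>x \<in> \<psi> ` ({0..1} \<times> {a..b}). norm x \<le> B"
    using compact_imp_bounded bounded_iff by blast
  then have B: "\<And>w. w \<in> {0..1} \<times> {a..b} \<Longrightarrow> \<bar>\<psi> w\<bar> \<le> B"
    by (metis image_eqI real_norm_def)
  show thesis
  proof
    fix z :: "real \<times> real" assume "a \<le> snd z" "snd z \<le> b"
    then have "shift (- \<lfloor>fst z\<rfloor>) z \<in> {0..1} \<times> {a..b}"
      using shift_floor_in_unit_strip[of z] by (auto simp: mem_Times_iff)
    with B show "\<bar>\<psi> z\<bar> \<le> B"
      using shift_invariantD[OF assms(2)] by metis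
  qed
qed

definition birkhoff_sum :: "('a \<Rightarrow> 'a) \<Rightarrow> ('a \<Rightarrow> real) \<Rightarrow> nat \<Rightarrow> 'a \<Rightarrow> real" where
  "birkhoff_sum f \<psi> n z = (\<Sum>k<n. \<psi> ((f ^^ k) z))"

lemma birkhoff_sum_add:
  "birkhoff_sum f \<psi> (a + b) z = birkhoff_sum f \<psi> a z + birkhoff_sum f \<psi> b ((f ^^ a) z)"
proof (induction b)
  case (Suc b)
  have "(f ^^ (a + b)) z = (f ^^ b) ((f ^^ a) z)"
    by (metis add.commute comp_apply funpow_add)
  with Suc show ?case
    by (simp add: birkhoff_sum_def)
qed (simp add: birkhoff_sum_def)

lemma birkhoff_sum_uminus: "birkhoff_sum f (\<lambda>z. - \<psi> z) n z = - birkhoff_sum f \<psi> n z"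
  by (simp add: birkhoff_sum_def sum_negf)

lemma abs_birkhoff_sum_le:
  assumes "\<And>k. k < n \<Longrightarrow> \<bar>\<psi> ((f ^^ k) z)\<bar> \<le> B"
  shows "\<bar>birkhoff_sum f \<psi> n z\<bar> \<le> real n * B"
proof -
  have "\<bar>birkhoff_sum f \<psi> n z\<bar> \<le> (\<Sum>k<n. \<bar>\<psi> ((f ^^ k) z)\<bar>)"
    unfolding birkhoff_sum_def by (rule sum_abs)
  also have "\<dots> \<le> real n * B"
    using sum_bounded_above[of "{..<n}" "\<lambda>k. \<bar>\<psi> ((f ^^ k) z)\<bar>" B] assms by simp
  finally show ?thesis .
qed

lemma le_linear_of_abs_le:
  fixes x B c :: real
  assumes "\<bar>x\<bar> \<le> real n * B"
  shows "x \<le> real n * c + real n * (B + \<bar>c\<bar>)"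
proof -
  have "0 \<le> real n * c + real n * \<bar>c\<bar>"
    using mult_nonneg_nonneg[of "real n" "c + \<bar>c\<bar>"] by (simp add: distrib_left)
  then show ?thesis
    unfolding distrib_left using assms abs_ge_self[of x] by linarith
qed

definition displacement :: "(real \<times> real \<Rightarrow> real \<times> real) \<Rightarrow> nat \<Rightarrow> real \<times> real \<Rightarrow> real" where
  "displacement f n z = fst ((f ^^ n) z) - fst z"

lemma displacement_eq_birkhoff_sum:
  "displacement f n z = birkhoff_sum f (displacement f 1) n z"
  by (induction n) (simp_all add: displacement_def birkhoff_sum_def)

lemma funpow_shift:
  fixes h :: "real \<times> real \<Rightarrow> real \<times> real"
  assumes "\<And>z. h (shift j z) = shift j (h z)"
  shows "(h ^^ k) (shift j z) = shift j ((h ^^ k) z)"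
  by (induction k) (simp_all add: assms)

lemma continuous_on_funpow:
  fixes h :: "'a::topological_space \<Rightarrow> 'a"
  assumes "continuous_on UNIV h"
  shows "continuous_on UNIV (h ^^ k)"
proof (induction k)
  case (Suc k)
  have "continuous_on UNIV (h \<circ> h ^^ k)"
    by (rule continuous_on_compose[OF Suc]) (rule continuous_on_subset[OF assms], simp)
  then show ?case
    by simp
qed (simp add: continuous_on_id)

section \<open>Homeomorphisms commuting with the translation\<close>

locale equivariant_homeo =
  fixes f g :: "real \<times> real \<Rightarrow> real \<times> real"
  assumes homeo: "homeomorphism UNIV UNIV f g"
    and f_Ttrans: "\<And>z. f (Ttrans z) = Ttrans (f z)"
begin

lemma g_f [simp]: "g (f z) = z" and f_g [simp]: "f (g z) = z"
  using homeo by (auto intro: homeomorphism_apply1 homeomorphism_apply2)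

lemma continuous_f: "continuous_on UNIV f" and continuous_g: "continuous_on UNIV g"
  using homeo by (auto simp: homeomorphism_def)

lemma inv_f: "inv f = g"
  by (metis g_f f_g inv_equality ext)

lemma f_shift_nat: "f (shift (int n) z) = shift (int n) (f z)"
proof (induction n arbitrary: z)
  case (Suc n)
  have shift_Suc: "\<And>w. shift (int (Suc n)) w = Ttrans (shift (int n) w)"
    by (simp add: shift_def Ttrans_def)
  show ?case
    unfolding shift_Suc f_Ttrans Suc ..
qed simp

lemma f_shift: "f (shift j z) = shift j (f z)"
proof (cases "0 \<le> j")
  case True
  then show ?thesis
    using f_shift_nat[of "nat j"] by simp
next
  case False
  define n where "n = nat (- j)"
  have n: "int n + j = 0" "j + int n = 0"
    using False by (simp_all add: n_def)
  have "shift j (f z) = shift j (f (shift (int n) (shift j z)))"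
    by (simp add: n)
  also have "\<dots> = f (shift j z)"
    by (subst f_shift_nat) (simp add: n)
  finally show ?thesis
    by (rule sym)
qed

lemma g_shift: "g (shift j z) = shift j (g z)"
  by (metis f_shift g_f f_g)

lemma funpow_f_shift: "(f ^^ k) (shift j z) = shift j ((f ^^ k) z)"
  and funpow_g_shift: "(g ^^ k) (shift j z) = shift j ((g ^^ k) z)"
  by (simp_all add: funpow_shift f_shift g_shift)

lemma funpow_g_funpow_f:
  "(g ^^ k) ((f ^^ m) z) = (if k \<le> m then (f ^^ (m - k)) z else (g ^^ (k - m)) z)"
proof (induction k arbitrary: m)
  case (Suc k)
  show ?case
  proof (cases m)
    case (Suc m')
    have "(g ^^ Suc k) ((f ^^ Suc m') z) = (g ^^ k) ((f ^^ m') z)"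
      by (metis comp_apply funpow_Suc_right funpow.simps(2) g_f)
    then show ?thesis
      using Suc.IH[of m'] Suc by simp
  qed simp
qed simp

lemma Theta_eq: "Theta f E = {x. \<forall>k. (f ^^ k) x \<in> E \<and> (g ^^ k) x \<in> E}"
proof -
  have "iter_int f (int k) = f ^^ k" "iter_int f (- int k) = g ^^ k" for k
    by (cases "k = 0") (simp_all add: iter_int_def inv_f)
  moreover have "n = int (nat n) \<or> n = - int (nat (- n))" for n :: int
    by linarith
  ultimately show ?thesis
    unfolding Theta_def by (metis (no_types, opaque_lifting) funpow_0)
qed

lemma Theta_funpow_in: "x \<in> Theta f E \<Longrightarrow> (f ^^ k) x \<in> E"
  unfolding Theta_eq by blast

lemma funpow_in_Theta:
  assumes "x \<in> Theta f E"
  shows "(f ^^ m) x \<in> Theta f E"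
proof -
  have "(f ^^ k) ((f ^^ m) x) = (f ^^ (k + m)) x" for k
    by (simp add: funpow_add)
  with assms show ?thesis
    unfolding Theta_eq by (simp add: funpow_g_funpow_f)
qed

lemma shift_invariant_birkhoff_sum:
  assumes "shift_invariant \<psi>"
  shows "shift_invariant (birkhoff_sum f \<psi> n)"
  unfolding shift_invariant_def birkhoff_sum_def
  by (intro allI sum.cong refl) (simp only: funpow_f_shift shift_invariantD[OF assms])

lemma continuous_on_birkhoff_sum:
  assumes "continuous_on UNIV \<psi>"
  shows "continuous_on UNIV (birkhoff_sum f \<psi> n)"
proof -
  have "continuous_on UNIV (\<lambda>z. \<psi> ((f ^^ k) z))" for k
    using continuous_on_compose2[OF assms continuous_on_funpow[OF continuous_f]] by simp
  then show ?thesis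
    unfolding birkhoff_sum_def by (intro continuous_on_sum)
qed

lemma shift_invariant_displacement: "shift_invariant (displacement f 1)"
  by (simp add: shift_invariant_def displacement_def f_shift)

lemma continuous_on_displacement: "continuous_on UNIV (displacement f 1)"
proof -
  have "displacement f 1 = (\<lambda>z. fst (f z) - fst z)"
    by (simp add: displacement_def fun_eq_iff)
  then show ?thesis
    by (simp add: continuous_on_diff continuous_on_fst continuous_f continuous_on_id)
qed

end

section \<open>Rotation sets\<close>

definition displacement_averages ::
    "(real \<times> real \<Rightarrow> real \<times> real) \<Rightarrow> (real \<times> real) set \<Rightarrow> nat \<Rightarrow> ereal set" where
  "displacement_averages f E m =
    (\<Union>n\<in>{m..}. {ereal (displacement f n z / n) | z. z \<in> E \<and> (f ^^ n) z \<in> E})"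

lemma rot_set_eq: "rot_set f E = (\<Inter>m\<in>{1..}. closure (displacement_averages f E m))"
  by (simp add: rot_set_def displacement_averages_def displacement_def)

lemma rot_set_subset_closed:
  assumes "closed C" "1 \<le> m"
    and "\<And>n z. m \<le> n \<Longrightarrow> z \<in> E \<Longrightarrow> (f ^^ n) z \<in> E \<Longrightarrow> ereal (displacement f n z / n) \<in> C"
  shows "rot_set f E \<subseteq> C"
proof -
  have "rot_set f E \<subseteq> closure (displacement_averages f E m)"
    unfolding rot_set_eq using assms(2) by blast
  also have "\<dots> \<subseteq> C"
    using assms(3) unfolding displacement_averages_def by (intro closure_minimal[OF _ assms(1)]) auto
  finally show ?thesis .
qed

lemma rot_set_le:
  fixes c K :: real
  assumes "0 \<le> K" "\<And>n z. z \<in> E \<Longrightarrow> (f ^^ n) z \<in> E \<Longrightarrow> displacement f n z \<le> n * c + K"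
    and "v \<in> rot_set f E"
  shows "v \<le> ereal c"
proof (rule LIMSEQ_le_const)
  show "(\<lambda>j. ereal (c + K / Suc j)) \<longlonglongrightarrow> ereal c"
    using tendsto_add[OF tendsto_const LIMSEQ_Suc[OF lim_const_over_n[of K]], of c] by simp
  have "rot_set f E \<subseteq> {..ereal (c + K / Suc j)}" for j
  proof (rule rot_set_subset_closed[of _ "Suc j"])
    fix n z assume n: "Suc j \<le> n" and "z \<in> E" "(f ^^ n) z \<in> E"
    then have "displacement f n z / n \<le> (n * c + K) / n"
      by (intro divide_right_mono assms(2)) auto
    also have "\<dots> \<le> c + K / Suc j"
      using n \<open>0 \<le> K\<close> by (simp add: add_divide_distrib frac_le)
    finally show "ereal (displacement f n z / n) \<in> {..ereal (c + K / Suc j)}"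
      by simp
  qed auto
  then show "\<exists>N. \<forall>j\<ge>N. v \<le> ereal (c + K / Suc j)"
    using assms(3) by blast
qed

lemma rot_set_ge:
  fixes c K :: real
  assumes "0 \<le> K" "\<And>n z. z \<in> E \<Longrightarrow> (f ^^ n) z \<in> E \<Longrightarrow> n * c - K \<le> displacement f n z"
    and "v \<in> rot_set f E"
  shows "ereal c \<le> v"
proof (rule LIMSEQ_le_const2)
  show "(\<lambda>j. ereal (c - K / Suc j)) \<longlonglongrightarrow> ereal c"
    using tendsto_diff[OF tendsto_const LIMSEQ_Suc[OF lim_const_over_n[of K]], of c] by simp
  have "rot_set f E \<subseteq> {ereal (c - K / Suc j)..}" for j
  proof (rule rot_set_subset_closed[of _ "Suc j"])
    fix n z assume n: "Suc j \<le> n" and "z \<in> E" "(f ^^ n) z \<in> E"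
    have "c - K / Suc j \<le> (n * c - K) / n"
      using n \<open>0 \<le> K\<close> by (simp add: diff_divide_distrib frac_le)
    also have "\<dots> \<le> displacement f n z / n"
      using n \<open>z \<in> E\<close> \<open>(f ^^ n) z \<in> E\<close> by (intro divide_right_mono assms(2)) auto
    finally show "ereal (displacement f n z / n) \<in> {ereal (c - K / Suc j)..}"
      by simp
  qed auto
  then show "\<exists>N. \<forall>j\<ge>N. ereal (c - K / Suc j) \<le> v"
    using assms(3) by blast
qed

lemma rot_set_limit_point:
  assumes "\<And>k. z k \<in> X" "\<And>k. (f ^^ Suc k) (z k) \<in> X"
    and "\<And>k. displacement f (Suc k) (z k) / Suc k \<in> {a..b}"
  shows "\<exists>l\<in>{a..b}. ereal l \<in> rot_set f X"
proof -
  define x where "x k = displacement f (Suc k) (z k) / Suc k" for k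
  have "\<forall>k. x k \<in> {a..b}"
    using assms(3) by (simp add: x_def)
  then obtain l r where l: "l \<in> {a..b}" and "strict_mono r" and lim: "(x \<circ> r) \<longlonglongrightarrow> l"
    using compact_Icc[of a b] unfolding compact_def by blast
  have "ereal l \<in> closure (displacement_averages f X m)" for m
  proof (rule Lim_in_closed_set[OF closed_closure])
    show "(\<lambda>k. ereal (x (r k))) \<longlonglongrightarrow> ereal l"
      using lim by (simp add: comp_def)
    have "ereal (x k) \<in> displacement_averages f X m" if "m \<le> Suc k" for k
      using assms(1,2) that unfolding x_def displacement_averages_def
      by (intro UN_I[of "Suc k"] CollectI exI[of _ "z k"]) auto
    moreover have "m \<le> Suc (r k)" if "m \<le> k" for k
      using seq_suble[OF \<open>strict_mono r\<close>, of k] that by simp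
    ultimately show "\<forall>\<^sub>F k in sequentially. ereal (x (r k)) \<in> closure (displacement_averages f X m)"
      by (intro eventually_sequentiallyI[of m] closure_subset[THEN subsetD]) blast
  qed simp
  with l show ?thesis
    unfolding rot_set_eq by blast
qed

section \<open>Orbit-convex sets\<close>

locale orbit_convex_set = equivariant_homeo +
  fixes E :: "(real \<times> real) set" and lo hi :: real
  assumes closed_E: "closed E"
    and shift_E: "\<And>z j. z \<in> E \<Longrightarrow> shift j z \<in> E"
    and E_strip: "E \<subseteq> UNIV \<times> {lo..hi}"
    and orbit_convex: "\<And>z n k. z \<in> E \<Longrightarrow> (f ^^ n) z \<in> E \<Longrightarrow> k \<le> n \<Longrightarrow> (f ^^ k) z \<in> E"
begin

definition fundamental_domain :: "(real \<times> real) set" where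
  "fundamental_domain = E \<inter> {0..1} \<times> {lo..hi}"

lemma compact_fundamental_domain: "compact fundamental_domain"
  unfolding fundamental_domain_def by (intro closed_Int_compact closed_E compact_Times compact_Icc)

lemma shift_floor_in_fundamental_domain:
  "z \<in> E \<Longrightarrow> shift (- \<lfloor>fst z\<rfloor>) z \<in> fundamental_domain"
  using shift_floor_in_unit_strip[of z] shift_E E_strip
  by (fastforce simp: fundamental_domain_def mem_Times_iff)

lemma bounded_on_E:
  fixes \<psi> :: "real \<times> real \<Rightarrow> real"
  assumes "continuous_on UNIV \<psi>" "shift_invariant \<psi>"
  obtains B where "0 \<le> B" "\<And>z. z \<in> E \<Longrightarrow> \<bar>\<psi> z\<bar> \<le> B"
proof -
  obtain B where B: "\<And>z. lo \<le> snd z \<Longrightarrow> snd z \<le> hi \<Longrightarrow> \<bar>\<psi> z\<bar> \<le> B"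
    using shift_invariant_bounded_on_strip[OF assms] by blast
  show thesis
  proof (rule that[of "max B 0"])
    fix z assume "z \<in> E"
    then have "lo \<le> snd z" "snd z \<le> hi"
      using E_strip by (auto simp: mem_Times_iff)
    then show "\<bar>\<psi> z\<bar> \<le> max B 0"
      using B by (meson max.coboundedI1 order_trans)
  qed simp
qed

lemma abs_birkhoff_sum_le_on_E:
  assumes "\<And>z. z \<in> E \<Longrightarrow> \<bar>\<psi> z\<bar> \<le> B" "z \<in> E" "(f ^^ n) z \<in> E"
  shows "\<bar>birkhoff_sum f \<psi> n z\<bar> \<le> real n * B"
  using assms orbit_convex by (intro abs_birkhoff_sum_le) auto

lemma limit_in_Theta:
  assumes segment: "\<And>L k. k \<le> L \<Longrightarrow> (f ^^ k) (w L) \<in> E \<and> (g ^^ k) (w L) \<in> E"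
    and "strict_mono r" and lim: "(w \<circ> r) \<longlonglongrightarrow> l"
  shows "l \<in> Theta f E"
proof -
  have "(h ^^ k) l \<in> E"
    if h: "continuous_on UNIV h" "\<And>L. k \<le> L \<Longrightarrow> (h ^^ k) (w L) \<in> E" for h k
  proof (rule Lim_in_closed_set[OF closed_E])
    show "(\<lambda>n. (h ^^ k) (w (r n))) \<longlonglongrightarrow> (h ^^ k) l"
      using continuous_on_tendsto_compose[OF continuous_on_funpow[OF h(1)] lim] by (simp add: comp_def)
    show "\<forall>\<^sub>F n in sequentially. (h ^^ k) (w (r n)) \<in> E"
      using seq_suble[OF \<open>strict_mono r\<close>] h(2)
      by (intro eventually_sequentiallyI[of k]) (meson le_trans)
  qed simp
  then show ?thesis
    unfolding Theta_eq using segment continuous_f continuous_g by blast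
qed

text \<open>Otherwise the midpoints of longer and longer orbit segments in \<open>E\<close>, translated into the
  fundamental domain, accumulate at a point of \<open>Theta f E\<close> where \<open>\<phi> \<ge> t\<close>.\<close>

lemma long_segment_midpoint_below:
  fixes \<phi> :: "real \<times> real \<Rightarrow> real"
  assumes "continuous_on UNIV \<phi>" "shift_invariant \<phi>" "\<And>z. z \<in> Theta f E \<Longrightarrow> \<phi> z < t"
  obtains L where "\<And>z. (\<And>k. k \<le> 2 * L \<Longrightarrow> (f ^^ k) z \<in> E) \<Longrightarrow> \<phi> ((f ^^ L) z) < t"
proof -
  have "\<exists>L. \<forall>z. (\<forall>k \<le> 2 * L. (f ^^ k) z \<in> E) \<longrightarrow> \<phi> ((f ^^ L) z) < t"
  proof (rule ccontr)
    assume "\<not> ?thesis"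
    then have "\<forall>L. \<exists>z. (\<forall>k \<le> 2 * L. (f ^^ k) z \<in> E) \<and> \<not> \<phi> ((f ^^ L) z) < t"
      by blast
    then obtain zz where seg: "\<And>L k. k \<le> 2 * L \<Longrightarrow> (f ^^ k) (zz L) \<in> E"
      and above: "\<And>L. t \<le> \<phi> ((f ^^ L) (zz L))"
      by (metis not_less)
    define j where "j L = - \<lfloor>fst ((f ^^ L) (zz L))\<rfloor>" for L
    define w where "w L = shift (j L) ((f ^^ L) (zz L))" for L
    have w_F: "w L \<in> fundamental_domain" for L
      unfolding w_def j_def using seg[of L L] by (intro shift_floor_in_fundamental_domain) simp
    have "(f ^^ k) (w L) \<in> E \<and> (g ^^ k) (w L) \<in> E" if "k \<le> L" for k L
    proof -
      have "(f ^^ k) (w L) = shift (j L) ((f ^^ (k + L)) (zz L))"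
        "(g ^^ k) (w L) = shift (j L) ((f ^^ (L - k)) (zz L))"
        using that by (simp_all add: w_def funpow_f_shift funpow_g_shift funpow_g_funpow_f funpow_add)
      then show ?thesis
        using seg that shift_E by simp
    qed
    moreover obtain l r where "strict_mono r" and lim: "(w \<circ> r) \<longlonglongrightarrow> l"
      using compact_fundamental_domain w_F unfolding compact_def by metis
    ultimately have "l \<in> Theta f E"
      by (intro limit_in_Theta)
    moreover have "t \<le> \<phi> l"
    proof (rule LIMSEQ_le_const)
      show "(\<lambda>n. \<phi> (w (r n))) \<longlonglongrightarrow> \<phi> l"
        using continuous_on_tendsto_compose[OF assms(1) lim] by (simp add: comp_def)
      show "\<exists>N. \<forall>n\<ge>N. t \<le> \<phi> (w (r n))"
        using above by (simp add: w_def shift_invariantD[OF assms(2)])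
    qed
    ultimately show False
      using assms(3) by fastforce
  qed
  then show thesis
    using that by blast
qed

text \<open>The orbit is cut into blocks of length \<open>m\<close>; each block starts at the midpoint
  \<open>(f ^^ L) w\<close> of a segment of length \<open>2 * L\<close> inside \<open>E\<close>, so it contributes less than \<open>m * c\<close>.
  The last, shorter block costs at most \<open>m * (B + \<bar>c\<bar>)\<close>.\<close>

lemma birkhoff_sum_after_warmup_le:
  fixes \<psi> :: "real \<times> real \<Rightarrow> real" and c :: real
  assumes B: "\<And>z. z \<in> E \<Longrightarrow> \<bar>\<psi> z\<bar> \<le> B" and "0 \<le> B" "1 \<le> m"
    and L: "\<And>z. (\<And>k. k \<le> 2 * L \<Longrightarrow> (f ^^ k) z \<in> E) \<Longrightarrow> birkhoff_sum f \<psi> m ((f ^^ L) z) < m * c"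
  shows "(\<And>k. k \<le> q + 2 * L \<Longrightarrow> (f ^^ k) z \<in> E) \<Longrightarrow>
    birkhoff_sum f \<psi> q ((f ^^ L) z) \<le> q * c + m * (B + \<bar>c\<bar>)"
proof (induction q arbitrary: z rule: less_induct)
  case (less q)
  show ?case
  proof (cases "q < m")
    case True
    have start: "(f ^^ L) z \<in> E" and stop: "(f ^^ q) ((f ^^ L) z) \<in> E"
      using less.prems[of L] less.prems[of "q + L"] by (simp_all add: funpow_add)
    have "birkhoff_sum f \<psi> q ((f ^^ L) z) \<le> q * c + q * (B + \<bar>c\<bar>)"
      using abs_birkhoff_sum_le_on_E[OF B start stop] by (rule le_linear_of_abs_le)
    moreover have "real q * (B + \<bar>c\<bar>) \<le> m * (B + \<bar>c\<bar>)"
      using True \<open>0 \<le> B\<close> by (intro mult_right_mono) auto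
    ultimately show ?thesis
      by linarith
  next
    case False
    define p where "p = q - m"
    have q: "q = m + p"
      using False by (simp add: p_def)
    have "(f ^^ m) ((f ^^ L) z) = (f ^^ L) ((f ^^ m) z)"
      by (metis add.commute comp_apply funpow_add)
    then have split: "birkhoff_sum f \<psi> q ((f ^^ L) z) =
        birkhoff_sum f \<psi> m ((f ^^ L) z) + birkhoff_sum f \<psi> p ((f ^^ L) ((f ^^ m) z))"
      unfolding q birkhoff_sum_add by simp
    have "birkhoff_sum f \<psi> m ((f ^^ L) z) < m * c"
      using less.prems q by (intro L) simp
    moreover have "birkhoff_sum f \<psi> p ((f ^^ L) ((f ^^ m) z)) \<le> p * c + m * (B + \<bar>c\<bar>)"
    proof (rule less.IH)
      show "p < q"
        using q \<open>1 \<le> m\<close> by simp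
      show "(f ^^ k) ((f ^^ m) z) \<in> E" if "k \<le> p + 2 * L" for k
        using less.prems[of "k + m"] that q by (simp add: funpow_add)
    qed
    moreover have "real q = real m + real p"
      using q by simp
    ultimately show ?thesis
      unfolding split by (simp add: distrib_right)
  qed
qed

lemma birkhoff_sum_le_linear:
  fixes \<psi> :: "real \<times> real \<Rightarrow> real" and c :: real
  assumes B: "\<And>z. z \<in> E \<Longrightarrow> \<bar>\<psi> z\<bar> \<le> B" and "0 \<le> B" "1 \<le> m"
    and L: "\<And>z. (\<And>k. k \<le> 2 * L \<Longrightarrow> (f ^^ k) z \<in> E) \<Longrightarrow> birkhoff_sum f \<psi> m ((f ^^ L) z) < m * c"
    and z: "z \<in> E" "(f ^^ n) z \<in> E"
  shows "birkhoff_sum f \<psi> n z \<le> n * c + (2 * L + m) * (B + \<bar>c\<bar>)"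
proof (cases "n < 2 * L")
  case True
  have "birkhoff_sum f \<psi> n z \<le> n * c + n * (B + \<bar>c\<bar>)"
    using abs_birkhoff_sum_le_on_E[OF B z] by (rule le_linear_of_abs_le)
  moreover have "real n * (B + \<bar>c\<bar>) \<le> (2 * real L + real m) * (B + \<bar>c\<bar>)"
    using True \<open>0 \<le> B\<close> by (intro mult_right_mono) auto
  ultimately show ?thesis
    by linarith
next
  case False
  define q where "q = n - 2 * L"
  have n: "n = L + (q + L)"
    using False by (simp add: q_def)
  have segment: "(f ^^ k) z \<in> E" if "k \<le> q + 2 * L" for k
    using orbit_convex[OF z] that n by simp
  have mid: "(f ^^ L) z \<in> E" and late: "(f ^^ (q + L)) z \<in> E" and stop: "(f ^^ L) ((f ^^ (q + L)) z) \<in> E"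
    using segment[of L] segment[of "q + L"] z(2) n by (simp_all add: funpow_add)
  have "birkhoff_sum f \<psi> n z =
      birkhoff_sum f \<psi> L z + birkhoff_sum f \<psi> q ((f ^^ L) z) + birkhoff_sum f \<psi> L ((f ^^ (q + L)) z)"
    unfolding n birkhoff_sum_add by (simp add: funpow_add)
  moreover have "birkhoff_sum f \<psi> L z \<le> L * c + L * (B + \<bar>c\<bar>)"
    using abs_birkhoff_sum_le_on_E[OF B z(1) mid] by (rule le_linear_of_abs_le)
  moreover have "birkhoff_sum f \<psi> L ((f ^^ (q + L)) z) \<le> L * c + L * (B + \<bar>c\<bar>)"
    using abs_birkhoff_sum_le_on_E[OF B late stop] by (rule le_linear_of_abs_le)
  moreover have "birkhoff_sum f \<psi> q ((f ^^ L) z) \<le> q * c + m * (B + \<bar>c\<bar>)"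
    by (rule birkhoff_sum_after_warmup_le[OF B \<open>0 \<le> B\<close> \<open>1 \<le> m\<close> L segment])
  moreover have "real n = real q + 2 * real L"
    using n by simp
  ultimately show ?thesis
    by (simp add: distrib_right)
qed

lemma birkhoff_sum_le_of_Theta:
  fixes \<psi> :: "real \<times> real \<Rightarrow> real" and c :: real
  assumes "continuous_on UNIV \<psi>" "shift_invariant \<psi>" "1 \<le> m"
    and "\<And>z. z \<in> Theta f E \<Longrightarrow> birkhoff_sum f \<psi> m z < m * c"
  obtains K where "0 \<le> K" "\<And>n z. z \<in> E \<Longrightarrow> (f ^^ n) z \<in> E \<Longrightarrow> birkhoff_sum f \<psi> n z \<le> n * c + K"
proof -
  obtain B where B0: "0 \<le> B" and B: "\<And>z. z \<in> E \<Longrightarrow> \<bar>\<psi> z\<bar> \<le> B"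
    using bounded_on_E[OF assms(1,2)] by blast
  obtain L where
    L: "\<And>z. (\<And>k. k \<le> 2 * L \<Longrightarrow> (f ^^ k) z \<in> E) \<Longrightarrow> birkhoff_sum f \<psi> m ((f ^^ L) z) < m * c"
    using long_segment_midpoint_below[OF continuous_on_birkhoff_sum[OF assms(1)]
        shift_invariant_birkhoff_sum[OF assms(2)] assms(4)] by blast
  show thesis
  proof (rule that)
    show "0 \<le> (2 * real L + real m) * (B + \<bar>c\<bar>)"
      using B0 by simp
  qed (rule birkhoff_sum_le_linear[OF B B0 \<open>1 \<le> m\<close> L])
qed

lemma abs_displacement_le:
  obtains B where "\<And>n z. z \<in> E \<Longrightarrow> (f ^^ n) z \<in> E \<Longrightarrow> \<bar>displacement f n z\<bar> \<le> real n * B"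
proof -
  obtain B where B: "\<And>z. z \<in> E \<Longrightarrow> \<bar>displacement f 1 z\<bar> \<le> B"
    using bounded_on_E[OF continuous_on_displacement shift_invariant_displacement] by blast
  show thesis
  proof (rule that)
    fix n z assume "z \<in> E" "(f ^^ n) z \<in> E"
    from abs_birkhoff_sum_le_on_E[where \<psi> = "displacement f 1", OF B this] show "\<bar>displacement f n z\<bar> \<le> real n * B"
      unfolding displacement_eq_birkhoff_sum[symmetric] .
  qed
qed

lemma Theta_displacement_below:
  fixes c :: real
  assumes "Sup (rot_set f (Theta f E)) < ereal c"
  obtains m where "1 \<le> m" "\<And>z. z \<in> Theta f E \<Longrightarrow> displacement f m z < m * c"
proof -
  have "\<exists>m\<ge>1. \<forall>z\<in>Theta f E. displacement f m z < m * c"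
  proof (rule ccontr)
    assume "\<not> ?thesis"
    then have "\<forall>k. \<exists>w\<in>Theta f E. \<not> displacement f (Suc k) w < Suc k * c"
      by (metis One_nat_def Suc_le_mono le0)
    then obtain z where z: "\<And>k. z k \<in> Theta f E"
      and above: "\<And>k. \<not> displacement f (Suc k) (z k) < Suc k * c"
      by metis
    obtain B where B: "\<And>n w. w \<in> E \<Longrightarrow> (f ^^ n) w \<in> E \<Longrightarrow> \<bar>displacement f n w\<bar> \<le> real n * B"
      using abs_displacement_le by blast
    have average: "displacement f (Suc k) (z k) / Suc k \<in> {c..B}" for k
    proof -
      have "z k \<in> E" "(f ^^ Suc k) (z k) \<in> E"
        using Theta_funpow_in[OF z, of 0] Theta_funpow_in[OF z, of "Suc k"] by simp_all
      then have "displacement f (Suc k) (z k) \<le> Suc k * B"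
        using B abs_le_D1 by blast
      then show ?thesis
        using above[of k] by (simp add: field_simps)
    qed
    obtain l where "l \<in> {c..B}" "ereal l \<in> rot_set f (Theta f E)"
      using rot_set_limit_point[OF z funpow_in_Theta[OF z] average] by blast
    then have "ereal c \<le> Sup (rot_set f (Theta f E))"
      by (meson Sup_upper atLeastAtMost_iff ereal_less_eq(3) order_trans)
    then show False
      using assms by simp
  qed
  then show thesis
    using that by blast
qed

lemma Theta_displacement_above:
  fixes c :: real
  assumes "ereal c < Inf (rot_set f (Theta f E))"
  obtains m where "1 \<le> m" "\<And>z. z \<in> Theta f E \<Longrightarrow> m * c < displacement f m z"
proof -
  have "\<exists>m\<ge>1. \<forall>z\<in>Theta f E. m * c < displacement f m z"
  proof (rule ccontr)
    assume "\<not> ?thesis"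
    then have "\<forall>k. \<exists>w\<in>Theta f E. \<not> Suc k * c < displacement f (Suc k) w"
      by (metis One_nat_def Suc_le_mono le0)
    then obtain z where z: "\<And>k. z k \<in> Theta f E"
      and below: "\<And>k. \<not> Suc k * c < displacement f (Suc k) (z k)"
      by metis
    obtain B where B: "\<And>n w. w \<in> E \<Longrightarrow> (f ^^ n) w \<in> E \<Longrightarrow> \<bar>displacement f n w\<bar> \<le> real n * B"
      using abs_displacement_le by blast
    have average: "displacement f (Suc k) (z k) / Suc k \<in> {-B..c}" for k
    proof -
      have "z k \<in> E" "(f ^^ Suc k) (z k) \<in> E"
        using Theta_funpow_in[OF z, of 0] Theta_funpow_in[OF z, of "Suc k"] by simp_all
      then have "- (Suc k * B) \<le> displacement f (Suc k) (z k)"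
        using B abs_le_D2 by fastforce
      then show ?thesis
        using below[of k] by (simp add: field_simps)
    qed
    obtain l where "l \<in> {-B..c}" "ereal l \<in> rot_set f (Theta f E)"
      using rot_set_limit_point[OF z funpow_in_Theta[OF z] average] by blast
    then have "Inf (rot_set f (Theta f E)) \<le> ereal c"
      by (meson Inf_lower atLeastAtMost_iff ereal_less_eq(3) order_trans)
    then show False
      using assms by simp
  qed
  then show thesis
    using that by blast
qed

lemma rot_set_le_Sup_Theta:
  assumes "v \<in> rot_set f E"
  shows "v \<le> Sup (rot_set f (Theta f E))"
proof (rule ccontr)
  assume "\<not> ?thesis"
  then obtain c where c: "Sup (rot_set f (Theta f E)) < ereal c" "ereal c < v"
    using ereal_dense2 not_le by metis
  obtain m where m: "1 \<le> m" "\<And>z. z \<in> Theta f E \<Longrightarrow> displacement f m z < m * c"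
    using Theta_displacement_below[OF c(1)] by blast
  obtain K where "0 \<le> K" "\<And>n z. z \<in> E \<Longrightarrow> (f ^^ n) z \<in> E \<Longrightarrow> displacement f n z \<le> n * c + K"
    using birkhoff_sum_le_of_Theta[OF continuous_on_displacement shift_invariant_displacement m(1)] m(2)
    unfolding displacement_eq_birkhoff_sum[symmetric] by blast
  then have "v \<le> ereal c"
    using assms by (rule rot_set_le)
  with c(2) show False
    by simp
qed

lemma Inf_Theta_le_rot_set:
  assumes "v \<in> rot_set f E"
  shows "Inf (rot_set f (Theta f E)) \<le> v"
proof (rule ccontr)
  assume "\<not> ?thesis"
  then obtain c where c: "v < ereal c" "ereal c < Inf (rot_set f (Theta f E))"
    using ereal_dense2 not_le by metis
  obtain m where m: "1 \<le> m" "\<And>z. z \<in> Theta f E \<Longrightarrow> m * c < displacement f m z"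
    using Theta_displacement_above[OF c(2)] by blast
  have cont: "continuous_on UNIV (\<lambda>z. - displacement f 1 z)"
    by (intro continuous_on_minus continuous_on_displacement)
  have inv: "shift_invariant (\<lambda>z. - displacement f 1 z)"
    using shift_invariant_displacement by (simp add: shift_invariant_def)
  have below: "birkhoff_sum f (\<lambda>z. - displacement f 1 z) m z < m * (- c)" if "z \<in> Theta f E" for z
    using m(2)[OF that] unfolding birkhoff_sum_uminus displacement_eq_birkhoff_sum[symmetric] by simp
  obtain K where "0 \<le> K"
    "\<And>n z. z \<in> E \<Longrightarrow> (f ^^ n) z \<in> E \<Longrightarrow> birkhoff_sum f (\<lambda>z. - displacement f 1 z) n z \<le> n * (- c) + K"
    using birkhoff_sum_le_of_Theta[OF cont inv m(1) below] by blast
  then have "ereal c \<le> v"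
    using assms unfolding birkhoff_sum_uminus displacement_eq_birkhoff_sum[symmetric]
    by (intro rot_set_ge[of K]) (auto simp: algebra_simps)
  with c(1) show False
    by simp
qed

lemma rot_set_subset_hull: "rot_set f E \<subseteq> ereal_hull (rot_set f (Theta f E))"
proof
  fix v assume v: "v \<in> rot_set f E"
  let ?R = "rot_set f (Theta f E)"
  have bounds: "Inf ?R \<le> v" "v \<le> Sup ?R"
    using Inf_Theta_le_rot_set[OF v] rot_set_le_Sup_Theta[OF v] .
  then have "?R \<noteq> {}"
    by (auto simp: top_ereal_def bot_ereal_def)
  moreover have "closed ?R"
    unfolding rot_set_eq by (intro closed_INT) auto
  ultimately show "v \<in> ereal_hull ?R"
    unfolding ereal_hull_def using closed_contains_Sup_cl closed_contains_Inf_cl bounds by blast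
qed

end

section \<open>Trapping lines\<close>

definition traps_below :: "(real \<times> real \<Rightarrow> real \<times> real) \<Rightarrow> real \<Rightarrow> bool" where
  "traps_below f c \<longleftrightarrow> (\<forall>z. snd z \<le> c \<longrightarrow> snd (f z) < c)"

lemma traps_belowD: "traps_below f c \<Longrightarrow> snd z \<le> c \<Longrightarrow> snd (f z) < c"
  unfolding traps_below_def by blast

lemma funpow_traps_below_le: "traps_below f c \<Longrightarrow> snd z \<le> c \<Longrightarrow> snd ((f ^^ k) z) \<le> c"
  by (induction k) (auto dest: traps_belowD intro: less_imp_le)

lemma funpow_traps_below_less: "traps_below f c \<Longrightarrow> snd z < c \<Longrightarrow> snd ((f ^^ k) z) < c"
  by (induction k) (simp_all add: traps_belowD less_imp_le)

lemma free_line_below: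
  assumes "f ` hline c \<subseteq> Uminus (hline c)" "snd z = c"
  shows "snd (f z) < c"
proof -
  have "f z \<in> Uminus (hline c)"
    using assms by (auto simp: hline_def)
  then show ?thesis
    by (auto simp: Uminus_def hline_def)
qed

context equivariant_homeo
begin

lemma open_image_f: "open X \<Longrightarrow> open (f ` X)"
proof -
  assume "open X"
  have "f ` X = g -` X"
    by (auto simp: image_iff) (metis f_g)
  then show ?thesis
    using open_vimage[OF \<open>open X\<close> continuous_g] by simp
qed

text \<open>The images of the open half-planes below and above the line are disjoint open sets
  covering the connected closed half-plane above it.\<close>

lemma free_line_dichotomy:
  assumes free: "f ` hline c \<subseteq> Uminus (hline c)"
  shows "traps_below f c \<or> {z. c \<le> snd z} \<subseteq> f ` {z. snd z < c}"
proof (cases "traps_below f c")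
  case False
  let ?U = "{z :: real \<times> real. c \<le> snd z}"
  let ?below = "{z :: real \<times> real. snd z < c}" and ?above = "{z :: real \<times> real. c < snd z}"
  obtain z where z: "snd z \<le> c" "c \<le> snd (f z)"
    using False unfolding traps_below_def by (auto simp: not_less)
  then have "f z \<in> f ` ?below \<inter> ?U"
    using free_line_below[OF free, of z] by fastforce
  have "?U = UNIV \<times> {c..}" "?below = UNIV \<times> {..<c}" "?above = UNIV \<times> {c<..}"
    by auto
  then have "connected ?U" "open ?below" "open ?above"
    by (simp_all add: convex_connected convex_Times open_Times)
  moreover have "f ` ?below \<inter> f ` ?above \<inter> ?U = {}"
    by (auto dest: arg_cong[of _ _ g])
  moreover have cover: "?U \<subseteq> f ` ?below \<union> f ` ?above"
  proof
    fix u assume "u \<in> ?U"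
    then have "snd (g u) \<noteq> c"
      using free_line_below[OF free, of "g u"] by auto
    then show "u \<in> f ` ?below \<union> f ` ?above"
      by (metis f_g UnI1 UnI2 image_eqI linorder_neqE mem_Collect_eq)
  qed
  ultimately have "f ` ?below \<inter> ?U = {} \<or> f ` ?above \<inter> ?U = {}"
    using connectedD open_image_f by metis
  with \<open>f z \<in> f ` ?below \<inter> ?U\<close> cover show ?thesis
    by blast
qed simp

lemma traps_below_if_lifted_point:
  assumes free: "f ` hline c \<subseteq> Uminus (hline c)" and "c < snd q" "c \<le> snd (f q)"
  shows "traps_below f c"
proof (rule ccontr)
  assume "\<not> traps_below f c"
  then obtain w where "f q = f w" "snd w < c"
    using free_line_dichotomy[OF free] assms(3) by blast
  then show False
    using \<open>c < snd q\<close> by (metis g_f less_asym)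
qed

lemma traps_below_if_Theta:
  assumes free: "f ` hline lo \<subseteq> Uminus (hline lo)" and "lo < hi" and "Theta f (band hi lo) \<noteq> {}"
  shows "traps_below f lo"
proof -
  obtain z where z: "z \<in> Theta f (band hi lo)"
    using assms(3) by blast
  have "lo \<le> snd z" "lo \<le> snd (f z)"
    using Theta_funpow_in[OF z, of 0] Theta_funpow_in[OF z, of 1] \<open>lo < hi\<close> by (auto simp: band_def)
  moreover have "snd z \<noteq> lo"
    using free_line_below[OF free, of z] \<open>lo \<le> snd (f z)\<close> by fastforce
  ultimately show ?thesis
    by (intro traps_below_if_lifted_point[OF free]) auto
qed

text \<open>Below \<open>c\<close> the map stays below \<open>c\<close>, and on the band between \<open>c\<close> and \<open>c'\<close> its height is
  bounded; so the image of \<open>{y < c'}\<close> cannot contain the half-plane \<open>{y \<ge> c'}\<close>.\<close>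

lemma traps_below_above_trap:
  assumes free: "f ` hline c' \<subseteq> Uminus (hline c')" and trap: "traps_below f c" and "c \<le> c'"
  shows "traps_below f c'"
proof (rule ccontr)
  assume "\<not> traps_below f c'"
  then have onto: "{z. c' \<le> snd z} \<subseteq> f ` {z. snd z < c'}"
    using free_line_dichotomy[OF free] by blast
  have "continuous_on UNIV (\<lambda>z. snd (f z))"
    by (intro continuous_on_snd continuous_f)
  moreover have "shift_invariant (\<lambda>z. snd (f z))"
    by (simp add: shift_invariant_def f_shift)
  ultimately obtain M where M: "\<And>z. c \<le> snd z \<Longrightarrow> snd z \<le> c' \<Longrightarrow> \<bar>snd (f z)\<bar> \<le> M"
    using shift_invariant_bounded_on_strip[where a = c and b = c'] by blast
  have "(0, max c' (M + 1)) \<in> f ` {z. snd z < c'}"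
    using onto by auto
  then obtain w where w: "f w = (0, max c' (M + 1))" "snd w < c'"
    by (metis (mono_tags, lifting) imageE mem_Collect_eq)
  show False
  proof (cases "snd w \<le> c")
    case True
    then show False
      using traps_belowD[OF trap True] w(1) \<open>c \<le> c'\<close> by simp
  next
    case False
    then show False
      using M[of w] w by auto
  qed
qed

lemma orbit_convex_band:
  assumes "traps_below f lo" "traps_below f hi" "lo < hi"
  shows "orbit_convex_set f g (band hi lo) lo hi"
proof unfold_locales
  have band: "band hi lo = UNIV \<times> {lo..hi}"
    using \<open>lo < hi\<close> by (auto simp: band_def)
  then show "closed (band hi lo)" "band hi lo \<subseteq> UNIV \<times> {lo..hi}"
    by (simp_all add: closed_Times)
  show "shift j z \<in> band hi lo" if "z \<in> band hi lo" for z j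
    using that by (simp add: band mem_Times_iff)
  fix z n k assume z: "z \<in> band hi lo" "(f ^^ n) z \<in> band hi lo" and "k \<le> n"
  have "snd ((f ^^ k) z) \<le> hi"
    using funpow_traps_below_le[OF assms(2)] z(1) by (simp add: band mem_Times_iff)
  moreover have "lo \<le> snd ((f ^^ k) z)"
  proof (rule ccontr)
    assume "\<not> lo \<le> snd ((f ^^ k) z)"
    then have "snd ((f ^^ (n - k)) ((f ^^ k) z)) < lo"
      using funpow_traps_below_less[OF assms(1)] by simp
    moreover have "(f ^^ (n - k)) ((f ^^ k) z) = (f ^^ n) z"
      using \<open>k \<le> n\<close> by (metis funpow_add comp_apply le_add_diff_inverse2)
    ultimately show False
      using z(2) by (simp add: band mem_Times_iff)
  qed
  ultimately show "(f ^^ k) z \<in> band hi lo"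
    by (simp add: band mem_Times_iff)
qed

end

lemma hline_subset_Uplus_iff: "hline a \<subseteq> Uplus (hline b) \<longleftrightarrow> b < a"
proof
  assume "hline a \<subseteq> Uplus (hline b)"
  then have "(0, a) \<in> Uplus (hline b)"
    by (auto simp: hline_def)
  then show "b < a"
    by (auto simp: Uplus_def hline_def)
qed (auto simp: Uplus_def hline_def)

lemma ereal_hull_subset_greaterThanLessThan:
  "Y \<subseteq> {a<..<b} \<Longrightarrow> ereal_hull Y \<subseteq> {a<..<b}"
  unfolding ereal_hull_def by (force dest: less_le_trans le_less_trans)

theorem proposition6p7:
  fixes f :: "real \<times> real \<Rightarrow> real \<times> real"
    and c0 c1 c2 :: real
  assumes homeo: "\<exists>g. homeomorphism UNIV UNIV f g"
    and iso: "isotopic_to_id f"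
    and comm: "\<forall>z. f (Ttrans z) = Ttrans (f z)"
    and H1a: "hline c0 \<subseteq> Uplus (hline c1)"
    and H1b: "hline c1 \<subseteq> Uplus (hline c2)"
    and H1c: "\<forall>c\<in>{c0, c1, c2}. f ` hline c \<subseteq> Uminus (hline c)"
    and H2: "\<forall>n::nat. n \<ge> 1 \<longrightarrow> (f ^^ n) ` hline c0 \<inter> hline c2 \<noteq> {}"
    and H3a: "Theta f (band c0 c1) \<noteq> {}" and H3b: "Theta f (band c1 c2) \<noteq> {}"
    and H3c: "rot_set f (Theta f (band c0 c1)) \<subseteq> {0<..<\<infinity>}"
    and H3d: "rot_set f (Theta f (band c1 c2)) \<subseteq> {-\<infinity><..<0}"
  shows "rot_set f (band c0 c1) \<subseteq> ereal_hull (rot_set f (Theta f (band c0 c1)))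
       \<and> rot_set f (band c1 c2) \<subseteq> ereal_hull (rot_set f (Theta f (band c1 c2)))
       \<and> rot_set f (band c0 c1) \<subseteq> {0<..<\<infinity>}
       \<and> rot_set f (band c1 c2) \<subseteq> {-\<infinity><..<0}"
proof -
  obtain g where hom: "homeomorphism UNIV UNIV f g"
    using homeo by blast
  interpret equivariant_homeo f g
    by (rule equivariant_homeo.intro[OF hom]) (use comm in blast)
  have "c1 < c0" "c2 < c1"
    using H1a H1b by (simp_all add: hline_subset_Uplus_iff)
  have free: "f ` hline c0 \<subseteq> Uminus (hline c0)" "f ` hline c1 \<subseteq> Uminus (hline c1)"
    "f ` hline c2 \<subseteq> Uminus (hline c2)"
    using H1c by simp_all
  have trap1: "traps_below f c1"
    by (rule traps_below_if_Theta[OF free(2) \<open>c1 < c0\<close> H3a])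
  have trap2: "traps_below f c2"
    by (rule traps_below_if_Theta[OF free(3) \<open>c2 < c1\<close> H3b])
  have trap0: "traps_below f c0"
    using traps_below_above_trap[OF free(1) trap1] \<open>c1 < c0\<close> by simp
  interpret A0: orbit_convex_set f g "band c0 c1" c1 c0
    by (rule orbit_convex_band[OF trap1 trap0 \<open>c1 < c0\<close>])
  interpret A1: orbit_convex_set f g "band c1 c2" c2 c1
    by (rule orbit_convex_band[OF trap2 trap1 \<open>c2 < c1\<close>])
  show ?thesis
    using A0.rot_set_subset_hull A1.rot_set_subset_hull
      subset_trans[OF A0.rot_set_subset_hull ereal_hull_subset_greaterThanLessThan[OF H3c]]
      subset_trans[OF A1.rot_set_subset_hull ereal_hull_subset_greaterThanLessThan[OF H3d]]
    by (intro conjI)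
qed

end
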